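(* Let $X\subset\mathbb{R}^n$ be a nonempty compact convex set with diameter $D_X:=\max_{x,y\in X}\|x-y\|$ (Euclidean norm). Let $u\in X$, $g\in\mathbb{R}^n$, $\beta>0$, $\eta>0$, $\phi(x):=\langle g,x\rangle+\frac{\beta}{2}\|x-u\|^2$, and consider the ACGM procedure described in the context. Then, if the procedure terminates with output $u^+$, $$\max_{x\in X}\langle\nabla\phi(u^+),u^+-x\rangle\le\eta .$$ Moreover, if $\delta^t=\sigma\beta D_X^2/t$ for some $\sigma\ge0$ and $\alpha^t$ is chosen such that $$\phi(u^t)\le\phi\Big(\frac{t-1}{t+1}u^{t-1}+\frac{2}{t+1}v^t\Big)$$ for every $t$, then for any $t\ge1$ (for which $v^{t+1}$ is computed) $$\min_{j=1,\dots,t+1}\langle\nabla\phi(u^{j-1}),u^{j-1}-v^j\rangle\le\min_{j=1,\dots,t+1}\max_{x\in X}\langle\nabla\phi(u^{j-1}),u^{j-1}-x\rangle\le\frac{6(\sigma+1)\beta D_X^2}{t},$$ and the ACGM procedure terminates after at most $T:=1+\big\lceil (7\sigma+6)\beta D_X^2/\eta\big\rceil$ iterations.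
   Context: Note $\nabla\phi(x)=g+\beta(x-u)$. ACGM (approximate conditional gradient method) procedure for $\min_{x\in X}\phi(x)$, with input $u,g,\beta,\eta$ and a sequence of tolerances $\delta^t\ge0$: set $u^0:=u$. For $t=1,2,\dots$ (iteration $t$): compute $v^t\in X$ such that $\langle\nabla\phi(u^{t-1}),v^t-x\rangle\le\delta^t$ for all $x\in X$ (an approximate solution of the linear subproblem $\min_{x\in X}\langle\nabla\phi(u^{t-1}),x\rangle$). If $\langle\nabla\phi(u^{t-1}),u^{t-1}-v^t\rangle\le\eta-\delta^t$, stop and output $u^+:=u^{t-1}$. Otherwise set $u^t:=(1-\alpha^t)u^{t-1}+\alpha^t v^t$ with some step size $\alpha^t\in[0,1]$, and continue. *)

theory Defs
  imports "HOL-Analysis.Analysis"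
begin

definition acgm_phi :: "real^'n \<Rightarrow> real \<Rightarrow> real^'n \<Rightarrow> real^'n \<Rightarrow> real" where
  "acgm_phi g \<beta> u x = g \<bullet> x + \<beta> / 2 * (norm (x - u))\<^sup>2"

definition acgm_grad :: "real^'n \<Rightarrow> real \<Rightarrow> real^'n \<Rightarrow> real^'n \<Rightarrow> real^'n" where
  "acgm_grad g \<beta> u x = g + \<beta> *\<^sub>R (x - u)"

definition acgm_gap :: "real^'n \<Rightarrow> real \<Rightarrow> real^'n \<Rightarrow> (nat \<Rightarrow> real^'n) \<Rightarrow> (nat \<Rightarrow> real^'n) \<Rightarrow> nat \<Rightarrow> real" where
  "acgm_gap g \<beta> u us vs t = acgm_grad g \<beta> u (us (t - 1)) \<bullet> (us (t - 1) - vs t)"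

definition acgm_stop :: "real^'n \<Rightarrow> real \<Rightarrow> real^'n \<Rightarrow> real \<Rightarrow> (nat \<Rightarrow> real)
    \<Rightarrow> (nat \<Rightarrow> real^'n) \<Rightarrow> (nat \<Rightarrow> real^'n) \<Rightarrow> nat \<Rightarrow> bool" where
  "acgm_stop g \<beta> u \<eta> \<delta> us vs t \<longleftrightarrow> acgm_gap g \<beta> u us vs t \<le> \<eta> - \<delta> t"

text \<open>Conditions on v^t are only imposed if iteration t is reached (no stop in iterations 1..t-1);
  conditions on alpha^t, u^t only if iteration t did not stop either.\<close>

definition acgm_trace :: "(real^'n) set \<Rightarrow> real^'n \<Rightarrow> real^'n \<Rightarrow> real \<Rightarrow> real \<Rightarrow> (nat \<Rightarrow> real)
    \<Rightarrow> (nat \<Rightarrow> real) \<Rightarrow> (nat \<Rightarrow> real^'n) \<Rightarrow> (nat \<Rightarrow> real^'n) \<Rightarrow> bool" where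
  "acgm_trace X u g \<beta> \<eta> \<delta> \<alpha> us vs \<longleftrightarrow>
     us 0 = u \<and>
     (\<forall>t\<ge>1. (\<forall>j\<in>{1..<t}. \<not> acgm_stop g \<beta> u \<eta> \<delta> us vs j) \<longrightarrow>
        vs t \<in> X \<and> (\<forall>x\<in>X. acgm_grad g \<beta> u (us (t - 1)) \<bullet> (vs t - x) \<le> \<delta> t)) \<and>
     (\<forall>t\<ge>1. (\<forall>j\<in>{1..t}. \<not> acgm_stop g \<beta> u \<eta> \<delta> us vs j) \<longrightarrow>
        \<alpha> t \<in> {0..1} \<and> us t = (1 - \<alpha> t) *\<^sub>R us (t - 1) + \<alpha> t *\<^sub>R vs t)"

end

theory Submission
  imports Defs
begin

text \<open>Because v^t solves the linear subproblem up to \<delta>^t, the Frank-Wolfe gap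
  max_x <\<nabla>\<phi>(u^{t-1}), u^{t-1} - x> is at most gap_t + \<delta>^t, where gap_t is the quantity
  tested by the stopping rule; so stopping certifies the gap \<eta>.
  For the rate let h_j = \<phi>(u^j) - min_X \<phi>, s_j = gap_j + \<delta>^j and C = (\<sigma> + 1) \<beta> D_X^2.
  Expanding the quadratic \<phi> along the segment from u^{j-1} towards v^j with step 2/(j+1)
  and using the step-size rule gives h_j \<le> h_{j-1} - 2/(j+1) s_j + 2C/(j(j+1)), while convexity
  gives h_{j-1} \<le> s_j. The recursion yields h_j \<le> 2C/(j+1); summing it over the second half
  of the run, where h is already that small, shows s_j \<le> 6C/t for some j \<le> t+1.
  Termination follows since 6C \<le> (7\<sigma> + 6) \<beta> D_X^2.\<close>

lemma fw_split_index:
  fixes t :: nat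
  assumes "1 \<le> t"
  defines "k \<equiv> (t + 3) div 2"
  shows "2 \<le> k" and "k \<le> t + 1"
    and "2 * real t * (real t + 2) \<le> real k * (7 * real t + 12 - 6 * real k)"
proof -
  obtain m where "t = 2 * m \<or> t = 2 * m + 1"
    by (metis evenE oddE)
  then have "t = 2 * m \<and> k = m + 1 \<or> t = 2 * m + 1 \<and> k = m + 2"
    unfolding k_def by auto
  then show "2 \<le> k" "k \<le> t + 1"
    and "2 * real t * (real t + 2) \<le> real k * (7 * real t + 12 - 6 * real k)"
    using assms by (auto simp: algebra_simps)
qed

lemma fw_split_arith:
  fixes T K C :: real
  assumes "0 < T" "0 < K" "0 \<le> C" and "2 * T * (T + 2) \<le> K * (7 * T + 12 - 6 * K)"
  shows "4 * C / K - 2 * C / (T + 2) \<le> (T + 2 - K) * (2 / (T + 2)) * (6 * C / T)"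
proof -
  have "(T + 2 - K) * (2 / (T + 2)) * (6 * C / T) - (4 * C / K - 2 * C / (T + 2))
      = 2 * C * (K * (7 * T + 12 - 6 * K) - 2 * T * (T + 2)) / (K * T * (T + 2))"
    using assms(1,2) by (simp add: divide_simps) (simp add: algebra_simps)
  also have "\<dots> \<ge> 0"
    using assms by (intro divide_nonneg_nonneg mult_nonneg_nonneg) auto
  finally show ?thesis by simp
qed

locale fw_recursion =
  fixes h s :: "nat \<Rightarrow> real" and C :: real and N :: nat
  assumes C_nonneg: "0 \<le> C"
    and descent: "\<And>j. 1 \<le> j \<Longrightarrow> j \<le> N \<Longrightarrow>
      h j \<le> h (j - 1) - 2 / (real j + 1) * s j + 2 * C / (real j * (real j + 1))"
    and h_le_s: "\<And>j. 1 \<le> j \<Longrightarrow> j \<le> N \<Longrightarrow> h (j - 1) \<le> s j"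
begin

lemma h_le: "1 \<le> j \<Longrightarrow> j \<le> N \<Longrightarrow> h j \<le> 2 * C / (real j + 1)"
proof (induction j)
  case 0
  then show ?case by simp
next
  case (Suc n)
  show ?case
  proof (cases "n = 0")
    case True
    then show ?thesis
      using descent[of 1] h_le_s[of 1] Suc.prems by simp
  next
    case False
    define x where "x = real n"
    have x: "1 \<le> x" "real (Suc n) = x + 1"
      using False x_def by auto
    have "h (Suc n) \<le> h n - 2 / (x + 2) * s (Suc n) + 2 * C / ((x + 1) * (x + 2))"
      using descent[of "Suc n"] Suc.prems x by (simp add: add.commute)
    also have "\<dots> \<le> h n - 2 / (x + 2) * h n + 2 * C / ((x + 1) * (x + 2))"
      using h_le_s[of "Suc n"] Suc.prems x by (simp add: divide_right_mono)
    also have "\<dots> = x / (x + 2) * h n + 2 * C / ((x + 1) * (x + 2))"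
      using x by (simp add: field_simps)
    also have "\<dots> \<le> x / (x + 2) * (2 * C / (x + 1)) + 2 * C / ((x + 1) * (x + 2))"
      using Suc False x x_def by (intro add_right_mono mult_left_mono) auto
    also have "\<dots> = 2 * C / (real (Suc n) + 1)"
      using x by (simp add: divide_simps) (simp add: algebra_simps)
    finally show ?thesis .
  qed
qed

lemma h_telescope:
  assumes "1 \<le> k"
  shows "k - 1 \<le> m \<Longrightarrow> m \<le> N \<Longrightarrow>
    h m \<le> h (k - 1) - (\<Sum>j = k..m. 2 / (real j + 1) * s j) + 2 * C * (1 / real k - 1 / (real m + 1))"
proof (induction m)
  case 0
  then have "k = 1" using assms by simp
  then show ?case by simp
next
  case (Suc m)
  show ?case
  proof (cases "k = Suc m + 1")
    case True
    then show ?thesis by simp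
  next
    case False
    then have "k \<le> Suc m" using Suc.prems by simp
    let ?f = "\<lambda>j. 2 / (real j + 1) * s j"
    have IH: "h m \<le> h (k - 1) - sum ?f {k..m} + 2 * C * (1 / real k - 1 / (real m + 1))"
      using Suc \<open>k \<le> Suc m\<close> by simp
    have "h (Suc m) \<le> h m - ?f (Suc m) + 2 * C / (real (Suc m) * (real (Suc m) + 1))"
      using descent[of "Suc m"] Suc.prems by simp
    moreover have "2 * C / (real (Suc m) * (real (Suc m) + 1))
        = 2 * C * (1 / (real m + 1) - 1 / (real (Suc m) + 1))"
      by (simp add: field_simps)
    moreover have "sum ?f {k..Suc m} = sum ?f {k..m} + ?f (Suc m)"
      using \<open>k \<le> Suc m\<close> by (simp add: sum.nat_ivl_Suc')
    ultimately show ?thesis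
      using IH by (simp add: algebra_simps)
  qed
qed

lemma exists_small_s:
  assumes "1 \<le> t" "t + 1 \<le> N" "0 \<le> h (t + 1)"
  shows "\<exists>j\<in>{1..t + 1}. s j \<le> 6 * C / real t"
proof (rule ccontr)
  assume "\<not> ?thesis"
  then have large: "6 * C / real t < s j" if "j \<in> {1..t + 1}" for j
    using that by force
  \<comment> \<open>k \<approx> t/2 balances the bound h(k-1) \<le> 2C/k against the t+2-k summed terms\<close>
  define k where "k = (t + 3) div 2"
  note k = fw_split_index[OF assms(1), folded k_def]
  define M where "M = 6 * C / real t"
  have "(real t + 2 - real k) * (2 / (real t + 2)) * M = (\<Sum>j = k..t + 1. 2 / (real t + 2) * M)"
    using k by (simp add: of_nat_diff)
  also have "\<dots> \<le> (\<Sum>j = k..t + 1. 2 / (real j + 1) * M)"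
    using C_nonneg assms(1) unfolding M_def
    by (intro sum_mono mult_right_mono divide_left_mono) auto
  also have "\<dots> < (\<Sum>j = k..t + 1. 2 / (real j + 1) * s j)"
    using k large unfolding M_def by (intro sum_strict_mono mult_strict_left_mono) auto
  also have "\<dots> \<le> h (k - 1) + 2 * C * (1 / real k - 1 / (real t + 2))"
  proof -
    have "h (t + 1) \<le> h (k - 1) - (\<Sum>j = k..t + 1. 2 / (real j + 1) * s j)
        + 2 * C * (1 / real k - 1 / (real t + 2))"
      using h_telescope[of k "t + 1"] k assms(2) by (simp add: add.commute)
    then show ?thesis using assms(3) by linarith
  qed
  also have "\<dots> \<le> 4 * C / real k - 2 * C / (real t + 2)"
  proof -
    have "h (k - 1) \<le> 2 * C / real k"
      using h_le[of "k - 1"] k assms(2) by (simp add: of_nat_diff)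
    moreover have "2 * C * (1 / real k - 1 / (real t + 2)) = 2 * C / real k - 2 * C / (real t + 2)"
      by (simp add: right_diff_distrib)
    ultimately show ?thesis by simp
  qed
  finally show False
    using fw_split_arith[of "real t" "real k" C] k assms(1) C_nonneg unfolding M_def by simp
qed

end

lemma acgm_phi_add:
  "acgm_phi g \<beta> u (a + d) = acgm_phi g \<beta> u a + acgm_grad g \<beta> u a \<bullet> d + \<beta> / 2 * (norm d)\<^sup>2"
  unfolding acgm_phi_def acgm_grad_def power2_norm_eq_inner
  by (simp add: inner_add_left inner_add_right inner_diff_left inner_diff_right algebra_simps inner_commute)

lemma acgm_phi_diff_le_grad:
  assumes "0 \<le> \<beta>"
  shows "acgm_phi g \<beta> u a - acgm_phi g \<beta> u x \<le> acgm_grad g \<beta> u a \<bullet> (a - x)"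
  using acgm_phi_add[of g \<beta> u a "x - a"] assms by (simp add: inner_diff_right)

lemma acgm_phi_segment_le:
  assumes "0 \<le> \<beta>" and "norm (v - a) \<le> D"
  shows "acgm_phi g \<beta> u (a + \<gamma> *\<^sub>R (v - a))
    \<le> acgm_phi g \<beta> u a - \<gamma> * (acgm_grad g \<beta> u a \<bullet> (a - v)) + \<beta> / 2 * \<gamma>\<^sup>2 * D\<^sup>2"
proof -
  have "(norm (v - a))\<^sup>2 \<le> D\<^sup>2"
    using assms(2) norm_ge_zero power_mono by blast
  then have "\<beta> / 2 * (norm (\<gamma> *\<^sub>R (v - a)))\<^sup>2 \<le> \<beta> / 2 * \<gamma>\<^sup>2 * D\<^sup>2"
    using assms(1) by (simp add: power_mult_distrib mult_left_mono mult.assoc)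
  then show ?thesis
    unfolding acgm_phi_add by (simp add: inner_diff_right algebra_simps)
qed

locale acgm =
  fixes X :: "(real^'n) set" and u g :: "real^'n" and \<beta> \<eta> :: real
    and \<delta> \<alpha> :: "nat \<Rightarrow> real" and us vs :: "nat \<Rightarrow> real^'n"
  assumes X_nonempty: "X \<noteq> {}" and X_compact: "compact X" and X_convex: "convex X"
    and u_in_X: "u \<in> X" and \<beta>_nonneg: "0 \<le> \<beta>"
    and trace: "acgm_trace X u g \<beta> \<eta> \<delta> \<alpha> us vs"
begin

abbreviation "phi \<equiv> acgm_phi g \<beta> u"
abbreviation "grad \<equiv> acgm_grad g \<beta> u"
abbreviation "gap \<equiv> acgm_gap g \<beta> u us vs"
abbreviation "stop \<equiv> acgm_stop g \<beta> u \<eta> \<delta> us vs"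
abbreviation "reached t \<equiv> \<forall>j\<in>{1..<t}. \<not> stop j"
abbreviation "passed t \<equiv> \<forall>j\<in>{1..t}. \<not> stop j"
abbreviation "fw_gap a \<equiv> SUP x\<in>X. grad a \<bullet> (a - x)"

lemma us_0: "us 0 = u"
  using trace unfolding acgm_trace_def by simp

lemma vs_in_X: "1 \<le> t \<Longrightarrow> reached t \<Longrightarrow> vs t \<in> X"
  using trace unfolding acgm_trace_def by blast

lemma vs_approx_argmin: "1 \<le> t \<Longrightarrow> reached t \<Longrightarrow> x \<in> X \<Longrightarrow> grad (us (t - 1)) \<bullet> (vs t - x) \<le> \<delta> t"
  using trace unfolding acgm_trace_def by blast

lemma us_step:
  "1 \<le> t \<Longrightarrow> passed t \<Longrightarrow> \<alpha> t \<in> {0..1} \<and> us t = (1 - \<alpha> t) *\<^sub>R us (t - 1) + \<alpha> t *\<^sub>R vs t"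
  using trace unfolding acgm_trace_def by blast

lemma us_in_X: "passed t \<Longrightarrow> us t \<in> X"
proof (induction t)
  case 0
  then show ?case using us_0 u_in_X by simp
next
  case (Suc t)
  then have "us t \<in> X" "vs (Suc t) \<in> X"
    using vs_in_X[of "Suc t"] by auto
  then show ?case
    using us_step[of "Suc t"] Suc.prems convexD[OF X_convex] by auto
qed

lemma us_prev_in_X:
  assumes "1 \<le> t" "reached t"
  shows "us (t - 1) \<in> X"
proof (rule us_in_X)
  show "passed (t - 1)"
    using assms by auto
qed

lemma inner_grad_le_gap:
  "1 \<le> t \<Longrightarrow> reached t \<Longrightarrow> x \<in> X \<Longrightarrow> grad (us (t - 1)) \<bullet> (us (t - 1) - x) \<le> gap t + \<delta> t"
  using vs_approx_argmin unfolding acgm_gap_def by (force simp: inner_diff_right)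

lemma fw_gap_le_gap: "1 \<le> t \<Longrightarrow> reached t \<Longrightarrow> fw_gap (us (t - 1)) \<le> gap t + \<delta> t"
  using X_nonempty inner_grad_le_gap by (intro cSUP_least) auto

lemma gap_le_fw_gap: "1 \<le> t \<Longrightarrow> reached t \<Longrightarrow> gap t \<le> fw_gap (us (t - 1))"
proof -
  assume "1 \<le> t" "reached t"
  have "compact ((\<lambda>x. grad a \<bullet> (a - x)) ` X)" for a
    using X_compact by (intro compact_continuous_image continuous_intros)
  then have "bdd_above ((\<lambda>x. grad a \<bullet> (a - x)) ` X)" for a
    by (simp add: compact_imp_bounded bounded_imp_bdd_above)
  then show ?thesis
    unfolding acgm_gap_def using vs_in_X \<open>1 \<le> t\<close> \<open>reached t\<close> by (intro cSUP_upper) auto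
qed

lemma fw_gap_le_eta: "1 \<le> t \<Longrightarrow> reached t \<Longrightarrow> stop t \<Longrightarrow> fw_gap (us (t - 1)) \<le> \<eta>"
  using fw_gap_le_gap unfolding acgm_stop_def by fastforce

lemma phi_sub_le_gap: "1 \<le> t \<Longrightarrow> reached t \<Longrightarrow> x \<in> X \<Longrightarrow> phi (us (t - 1)) - phi x \<le> gap t + \<delta> t"
  using acgm_phi_diff_le_grad[OF \<beta>_nonneg] inner_grad_le_gap by (meson order.trans)

lemma Min_gap_le_Min_fw_gap:
  assumes "passed t"
  shows "Min (gap ` {1..t + 1}) \<le> Min ((\<lambda>j. fw_gap (us (j - 1))) ` {1..t + 1})"
proof -
  have "gap j \<le> fw_gap (us (j - 1))" if "j \<in> {1..t + 1}" for j
    using that assms by (intro gap_le_fw_gap) auto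
  then show ?thesis
    by (force simp: Min_ge_iff Min_le_iff)
qed

lemma first_stop:
  assumes "\<exists>j\<in>{1..T}. stop j"
  shows "\<exists>t\<in>{1..T}. reached t \<and> stop t"
proof -
  from assms obtain j where j: "j \<in> {1..T}" "stop j" by blast
  then obtain t where "t \<le> j" "\<forall>i<t. \<not> (1 \<le> i \<and> stop i)" "1 \<le> t \<and> stop t"
    using ex_least_nat_le[of "\<lambda>i. 1 \<le> i \<and> stop i" j] by auto
  then have "t \<in> {1..T}" "reached t" "stop t"
    using j by auto
  then show ?thesis by blast
qed

end

locale acgm_schedule = acgm +
  fixes \<sigma> :: real
  assumes \<sigma>_nonneg: "0 \<le> \<sigma>"
    and \<delta>_schedule: "\<And>t. 1 \<le> t \<Longrightarrow> \<delta> t = \<sigma> * \<beta> * (diameter X)\<^sup>2 / real t"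
    and step_rule: "\<And>t. 1 \<le> t \<Longrightarrow> passed t \<Longrightarrow>
      phi (us t) \<le> phi (((real t - 1) / (real t + 1)) *\<^sub>R us (t - 1) + (2 / (real t + 1)) *\<^sub>R vs t)"
begin

abbreviation "fw_point t \<equiv> ((real t - 1) / (real t + 1)) *\<^sub>R us (t - 1) + (2 / (real t + 1)) *\<^sub>R vs t"

abbreviation "rate_const \<equiv> (\<sigma> + 1) * \<beta> * (diameter X)\<^sup>2"

lemma fw_point_eq: "fw_point t = us (t - 1) + (2 / (real t + 1)) *\<^sub>R (vs t - us (t - 1))"
proof -
  have "(real t - 1) / (real t + 1) = 1 - 2 / (real t + 1)"
    by (simp add: field_simps)
  then show ?thesis by (simp add: scaleR_diff_left scaleR_diff_right)
qed

lemma fw_point_in_X: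
  assumes "1 \<le> t" "reached t"
  shows "fw_point t \<in> X"
proof (rule convexD[OF X_convex us_prev_in_X[OF assms] vs_in_X[OF assms]])
  show "(real t - 1) / (real t + 1) + 2 / (real t + 1) = 1"
    by (simp add: add_divide_distrib[symmetric])
qed (use assms(1) in auto)

lemma fw_point_descent:
  assumes "1 \<le> t" "reached t"
  shows "phi (fw_point t) \<le> phi (us (t - 1)) - 2 / (real t + 1) * (gap t + \<delta> t)
    + 2 * rate_const / (real t * (real t + 1))"
proof -
  define \<gamma> where "\<gamma> = 2 / (real t + 1)"
  define D where "D = diameter X"
  have "norm (vs t - us (t - 1)) \<le> D"
    using diameter_bounded_bound[OF compact_imp_bounded[OF X_compact] vs_in_X us_prev_in_X] assms
    unfolding D_def by (simp add: dist_norm)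
  then have "phi (fw_point t) \<le> phi (us (t - 1)) - \<gamma> * gap t + \<beta> / 2 * \<gamma>\<^sup>2 * D\<^sup>2"
    using acgm_phi_segment_le[OF \<beta>_nonneg, of "vs t" "us (t - 1)" D g u \<gamma>]
    unfolding fw_point_eq acgm_gap_def \<gamma>_def by simp
  moreover have "\<gamma> * \<delta> t = 2 * \<sigma> * \<beta> * D\<^sup>2 / (real t * (real t + 1))"
    using \<delta>_schedule[OF assms(1)] unfolding \<gamma>_def D_def by (simp add: mult.commute mult.left_commute)
  moreover have "\<beta> / 2 * \<gamma>\<^sup>2 * D\<^sup>2 \<le> 2 * \<beta> * D\<^sup>2 / (real t * (real t + 1))"
  proof -
    have "\<beta> / 2 * \<gamma>\<^sup>2 * D\<^sup>2 = 2 * \<beta> * D\<^sup>2 / ((real t + 1) * (real t + 1))"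
      unfolding \<gamma>_def by (simp add: power2_eq_square)
    also have "\<dots> \<le> 2 * \<beta> * D\<^sup>2 / (real t * (real t + 1))"
      using assms(1) \<beta>_nonneg by (intro divide_left_mono mult_right_mono mult_pos_pos) auto
    finally show ?thesis .
  qed
  moreover have "2 * \<sigma> * \<beta> * D\<^sup>2 / (real t * (real t + 1)) + 2 * \<beta> * D\<^sup>2 / (real t * (real t + 1))
      = 2 * rate_const / (real t * (real t + 1))"
    unfolding D_def by (simp add: add_divide_distrib[symmetric] algebra_simps)
  ultimately show ?thesis
    unfolding \<gamma>_def[symmetric] D_def[symmetric] by (simp only: distrib_left)
qed

lemma exists_small_gap:
  assumes "1 \<le> t" "passed t"
  shows "\<exists>j\<in>{1..t + 1}. gap j + \<delta> j \<le> 6 * rate_const / real t"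
proof -
  have "continuous_on X phi"
    unfolding acgm_phi_def by (intro continuous_intros)
  then obtain x_min where x_min: "x_min \<in> X" "\<And>y. y \<in> X \<Longrightarrow> phi x_min \<le> phi y"
    using continuous_attains_inf[OF X_compact X_nonempty] by blast
  \<comment> \<open>u^{t+1} need not exist, since iteration t+1 may stop; the point of the
    step-size rule stands in for it\<close>
  define h where "h j = (if j \<le> t then phi (us j) else phi (fw_point j)) - phi x_min" for j
  have reached: "1 \<le> j \<Longrightarrow> j \<le> t + 1 \<Longrightarrow> reached j" for j
    using assms(2) by auto
  interpret fw_recursion h "\<lambda>j. gap j + \<delta> j" rate_const "t + 1"
  proof
    show "0 \<le> rate_const"
      using \<sigma>_nonneg \<beta>_nonneg by simp
  next
    fix j assume j: "1 \<le> j" "j \<le> t + 1"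
    have "j - 1 \<le> t"
      using j(2) by simp
    then have h_prev: "h (j - 1) = phi (us (j - 1)) - phi x_min"
      unfolding h_def by simp
    have "h j \<le> phi (fw_point j) - phi x_min"
      using step_rule[of j] j assms(2) unfolding h_def by auto
    then show "h j \<le> h (j - 1) - 2 / (real j + 1) * (gap j + \<delta> j) + 2 * rate_const / (real j * (real j + 1))"
      using fw_point_descent[OF j(1) reached[OF j]] h_prev by linarith
    show "h (j - 1) \<le> gap j + \<delta> j"
      using phi_sub_le_gap[OF j(1) reached[OF j] x_min(1)] h_prev by simp
  qed
  have "0 \<le> h (t + 1)"
    unfolding h_def using x_min fw_point_in_X[of "t + 1"] reached[of "t + 1"] by simp
  then show ?thesis
    using exists_small_s[OF assms(1)] by simp
qed

lemma fw_gap_rate: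
  assumes "1 \<le> t" "passed t"
  shows "Min ((\<lambda>j. fw_gap (us (j - 1))) ` {1..t + 1}) \<le> 6 * (\<sigma> + 1) * \<beta> * (diameter X)\<^sup>2 / real t"
proof -
  obtain j where j: "j \<in> {1..t + 1}" "gap j + \<delta> j \<le> 6 * rate_const / real t"
    using exists_small_gap[OF assms] by blast
  have "reached j"
    using j(1) assms(2) by auto
  have "Min ((\<lambda>j. fw_gap (us (j - 1))) ` {1..t + 1}) \<le> fw_gap (us (j - 1))"
    using j(1) by (intro Min_le) auto
  also have "\<dots> \<le> gap j + \<delta> j"
    using fw_gap_le_gap \<open>reached j\<close> j(1) by simp
  also have "\<dots> \<le> 6 * (\<sigma> + 1) * \<beta> * (diameter X)\<^sup>2 / real t"
    using j(2) by (simp only: mult.assoc)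
  finally show ?thesis .
qed

lemma terminates:
  assumes "0 < \<beta>" "0 < \<eta>"
  shows "\<exists>t\<in>{1..1 + nat \<lceil>(7 * \<sigma> + 6) * \<beta> * (diameter X)\<^sup>2 / \<eta>\<rceil>}. reached t \<and> stop t"
proof (rule first_stop)
  define n where "n = nat \<lceil>(7 * \<sigma> + 6) * \<beta> * (diameter X)\<^sup>2 / \<eta>\<rceil>"
  show "\<exists>j\<in>{1..1 + n}. stop j"
  proof (cases "n = 0")
    case True
    then have "(7 * \<sigma> + 6) * \<beta> * (diameter X)\<^sup>2 \<le> 0"
      using assms(2) unfolding n_def by (simp add: divide_le_0_iff)
    then have "diameter X = 0"
      using assms(1) \<sigma>_nonneg by (simp add: mult_le_0_iff)
    then have "vs 1 = u"
      using diameter_bounded_bound[OF compact_imp_bounded[OF X_compact] vs_in_X[of 1] u_in_X]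
      by simp
    then have "stop 1"
      using \<delta>_schedule[of 1] \<open>diameter X = 0\<close> assms(2) us_0
      unfolding acgm_stop_def acgm_gap_def by simp
    then show ?thesis by auto
  next
    case False
    show ?thesis
    proof (rule ccontr)
      assume no_stop: "\<not> ?thesis"
      then have "passed n" by auto
      then obtain j where j: "j \<in> {1..n + 1}" "gap j + \<delta> j \<le> 6 * rate_const / real n"
        using exists_small_gap[of n] False by auto
      have "6 * rate_const = (6 * \<sigma> + 6) * \<beta> * (diameter X)\<^sup>2"
        by (simp add: algebra_simps)
      also have "\<dots> \<le> (7 * \<sigma> + 6) * \<beta> * (diameter X)\<^sup>2"
        using \<sigma>_nonneg assms(1) by (intro mult_right_mono) auto
      also have "\<dots> \<le> real n * \<eta>"
        using real_nat_ceiling_ge[of "(7 * \<sigma> + 6) * \<beta> * (diameter X)\<^sup>2 / \<eta>"] assms(2)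
        unfolding n_def by (simp add: divide_le_eq)
      finally have "6 * rate_const / real n \<le> \<eta>"
        using False by (simp add: pos_divide_le_eq mult.commute)
      then have "gap j + \<delta> j \<le> \<eta>"
        using j(2) by linarith
      then have "stop j"
        unfolding acgm_stop_def by simp
      then show False
        using no_stop j(1) by auto
    qed
  qed
qed

end

theorem mainTheorem2:
  fixes X :: "(real^'n) set" and u g :: "real^'n" and \<beta> \<eta> :: real
    and \<delta> \<alpha> :: "nat \<Rightarrow> real" and us vs :: "nat \<Rightarrow> real^'n"
  assumes "X \<noteq> {}" and "compact X" and "convex X"
    and "u \<in> X" and "\<beta> > 0" and "\<eta> > 0"
    and "\<forall>t\<ge>1. \<delta> t \<ge> 0"
    and trace: "acgm_trace X u g \<beta> \<eta> \<delta> \<alpha> us vs"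
  shows "(\<forall>t\<ge>1. (\<forall>j\<in>{1..<t}. \<not> acgm_stop g \<beta> u \<eta> \<delta> us vs j) \<and> acgm_stop g \<beta> u \<eta> \<delta> us vs t
            \<longrightarrow> (SUP x\<in>X. acgm_grad g \<beta> u (us (t - 1)) \<bullet> (us (t - 1) - x)) \<le> \<eta>)
    \<and> (\<forall>\<sigma>::real. \<sigma> \<ge> 0
          \<and> (\<forall>t\<ge>1. \<delta> t = \<sigma> * \<beta> * (diameter X)\<^sup>2 / real t)
          \<and> (\<forall>t\<ge>1. (\<forall>j\<in>{1..t}. \<not> acgm_stop g \<beta> u \<eta> \<delta> us vs j) \<longrightarrow>
                acgm_phi g \<beta> u (us t) \<le> acgm_phi g \<beta> u
                  (((real t - 1) / (real t + 1)) *\<^sub>R us (t - 1) + (2 / (real t + 1)) *\<^sub>R vs t))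
        \<longrightarrow> (\<forall>t\<ge>1. (\<forall>j\<in>{1..t}. \<not> acgm_stop g \<beta> u \<eta> \<delta> us vs j) \<longrightarrow>
               Min (acgm_gap g \<beta> u us vs ` {1..t+1})
                 \<le> Min ((\<lambda>j. SUP x\<in>X. acgm_grad g \<beta> u (us (j - 1)) \<bullet> (us (j - 1) - x)) ` {1..t+1})
             \<and> Min ((\<lambda>j. SUP x\<in>X. acgm_grad g \<beta> u (us (j - 1)) \<bullet> (us (j - 1) - x)) ` {1..t+1})
                 \<le> 6 * (\<sigma> + 1) * \<beta> * (diameter X)\<^sup>2 / real t)
          \<and> (\<exists>t\<in>{1..1 + nat \<lceil>(7 * \<sigma> + 6) * \<beta> * (diameter X)\<^sup>2 / \<eta>\<rceil>}.
               (\<forall>j\<in>{1..<t}. \<not> acgm_stop g \<beta> u \<eta> \<delta> us vs j) \<and> acgm_stop g \<beta> u \<eta> \<delta> us vs t))"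
proof -
  interpret acgm X u g \<beta> \<eta> \<delta> \<alpha> us vs
    using assms by unfold_locales auto
  show ?thesis
  proof (rule conjI, goal_cases stop_criterion schedule)
    case stop_criterion
    show ?case
      using fw_gap_le_eta by blast
  next
    case schedule
    show ?case
    proof (intro allI impI, goal_cases)
      case (1 \<sigma>)
      interpret acgm_schedule X u g \<beta> \<eta> \<delta> \<alpha> us vs \<sigma>
        using 1 by unfold_locales auto
      show ?case
        using Min_gap_le_Min_fw_gap fw_gap_rate terminates assms(5,6) by blast
    qed
  qed
qed

end
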